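(* Let $\{a_n\}_{n\in\mathbb Z}$ be i.i.d. random variables with values in $\{1,2,\dots\}$ with $\mathbb E[a_0]<\infty$, and let $N_0=\#\{m\in\mathbb Z: m<0,\ m+a_m>0\}+1$. Then for all $t\in\mathbb R$, $$\mathbb E[e^{tN_0}]=e^{t}\prod_{i=1}^{\infty}\left(e^{t}\,\mathbb P[a_0>i]+\mathbb P[a_0\le i]\right),$$ and $\mathbb E[e^{tN_0}]<\infty$ for all $t\in\mathbb R$. *)

theory Defs
  imports "HOL-Probability.Probability"
begin

text \<open>N_0 = #{m in Z : m < 0, m + a_m > 0} + 1 (evaluated pointwise at the sample x).
  The set is almost surely finite; on the null set where it is infinite, card gives 0.\<close>
definition N0 :: "(int \<Rightarrow> 'a \<Rightarrow> nat) \<Rightarrow> 'a \<Rightarrow> nat" where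
  "N0 a x = card {m::int. m < 0 \<and> m + int (a m x) > 0} + 1"

end

theory Submission
  imports Defs
begin

text \<open>On the indices \<open>-n, ..., -1\<close> the count defining \<open>N\<^sub>0\<close> is a sum of indicators of the
  independent events \<open>a(-i) > i\<close>, so the truncated moment generating function is
  \<open>e\<^sup>t\<close> times the first \<open>n\<close> factors of the product. Since \<open>\<Sum>\<^sub>i P[a\<^sub>0 > i] \<le> E[a\<^sub>0] < \<infinity>\<close>,
  the product converges and, by Borel-Cantelli, almost surely only finitely many of these
  events occur, so the truncated counts agree with \<open>N\<^sub>0\<close> eventually. Monotone convergence
  (upwards for \<open>t \<ge> 0\<close>, downwards from a finite integral for \<open>t < 0\<close>) passes to the limit.\<close>

definition N0_upto :: "nat \<Rightarrow> (int \<Rightarrow> 'a \<Rightarrow> nat) \<Rightarrow> 'a \<Rightarrow> nat" where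
  "N0_upto n a x = card {m \<in> {- int n..-1}. 0 < m + int (a m x)} + 1"

lemma N0_upto_mono:
  assumes "n \<le> n'"
  shows "N0_upto n a x \<le> N0_upto n' a x"
  unfolding N0_upto_def using assms
  by (intro add_right_mono card_mono) (auto intro: finite_subset[of _ "{- int n'..-1}"])

lemma N0_upto_eq_N0:
  assumes small: "\<And>i. n \<le> i \<Longrightarrow> a (- int (Suc i)) x \<le> Suc i"
  shows "N0_upto n a x = N0 a x"
proof -
  have "{m \<in> {- int n..-1}. 0 < m + int (a m x)} = {m. m < 0 \<and> 0 < m + int (a m x)}"
  proof (intro equalityI subsetI)
    fix m assume m: "m \<in> {m. m < 0 \<and> 0 < m + int (a m x)}"
    have "\<not> n \<le> nat (- m) - 1"
      using m small[of "nat (- m) - 1"] by auto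
    with m show "m \<in> {m \<in> {- int n..-1}. 0 < m + int (a m x)}" by auto
  qed auto
  thus ?thesis unfolding N0_upto_def N0_def by simp
qed

lemma exp_mult_card_eq_prod:
  fixes t :: real
  assumes "finite J"
  shows "exp (t * real (card {m \<in> J. P m})) = (\<Prod>m\<in>J. if P m then exp t else 1)"
proof -
  have "(\<Prod>m\<in>J. if P m then exp t else 1) = exp t ^ card {m \<in> J. P m}"
    using assms by (simp add: prod.If_cases Int_def)
  thus ?thesis by (simp add: exp_of_nat_mult[symmetric] mult.commute)
qed

lemma nn_integral_LIMSEQ_AE_incseq:
  fixes f :: "nat \<Rightarrow> 'a \<Rightarrow> ennreal"
  assumes inc: "\<And>x. incseq (\<lambda>i. f i x)" and [measurable]: "\<And>i. f i \<in> borel_measurable M"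
    and lim: "AE x in M. (\<lambda>i. f i x) \<longlonglongrightarrow> u x"
  shows "(\<lambda>n. integral\<^sup>N M (f n)) \<longlonglongrightarrow> integral\<^sup>N M u"
proof -
  have "integral\<^sup>N M u = (\<integral>\<^sup>+x. (SUP i. f i x) \<partial>M)"
    using lim by (intro nn_integral_cong_AE) (auto elim!: eventually_mono intro: LIMSEQ_unique LIMSEQ_SUP inc)
  moreover have "(\<lambda>n. integral\<^sup>N M (f n)) \<longlonglongrightarrow> (\<integral>\<^sup>+x. (SUP i. f i x) \<partial>M)"
    using inc by (intro nn_integral_LIMSEQ) (auto simp: incseq_def le_fun_def intro: LIMSEQ_SUP)
  ultimately show ?thesis by simp
qed

lemma nn_integral_LIMSEQ_AE_decseq:
  fixes f :: "nat \<Rightarrow> 'a \<Rightarrow> ennreal"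
  assumes dec: "\<And>x. decseq (\<lambda>i. f i x)" and [measurable]: "\<And>i. f i \<in> borel_measurable M"
    and fin: "integral\<^sup>N M (f 0) < \<infinity>" and lim: "AE x in M. (\<lambda>i. f i x) \<longlonglongrightarrow> u x"
  shows "(\<lambda>n. integral\<^sup>N M (f n)) \<longlonglongrightarrow> integral\<^sup>N M u"
proof -
  have "integral\<^sup>N M u = (\<integral>\<^sup>+x. (INF i. f i x) \<partial>M)"
    using lim by (intro nn_integral_cong_AE) (auto elim!: eventually_mono intro: LIMSEQ_unique LIMSEQ_INF dec)
  also have "\<dots> = (INF i. integral\<^sup>N M (f i))"
    using dec fin by (intro nn_integral_monotone_convergence_INF_AE') (auto simp: decseq_Suc_iff)
  finally show ?thesis
    using dec by (auto intro!: LIMSEQ_INF nn_integral_mono simp: decseq_def)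
qed

lemma (in prob_space) summable_prob_greater:
  assumes X[measurable]: "X \<in> measurable M (count_space UNIV)"
    and int: "integrable M (\<lambda>x. real (X x :: nat))"
  shows "summable (\<lambda>i. prob {x\<in>space M. Suc i < X x})"
proof (rule summableI_nonneg_bounded)
  fix n
  have ind_le: "(\<Sum>i<n. indicator {x\<in>space M. Suc i < X x} x :: real) \<le> real (X x)"
    if "x \<in> space M" for x
  proof -
    have "(\<Sum>i<n. indicator {x\<in>space M. Suc i < X x} x :: real) = card {i\<in>{..<n}. Suc i < X x}"
      using that by (simp add: indicator_def sum.If_cases Int_def)
    also have "\<dots> \<le> card {..<X x}"
      by (intro of_nat_mono card_mono) auto
    finally show ?thesis by simp
  qed
  have "(\<Sum>i<n. prob {x\<in>space M. Suc i < X x})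
      = (\<integral>x. (\<Sum>i<n. indicator {x\<in>space M. Suc i < X x} x) \<partial>M)"
    by (subst Bochner_Integration.integral_sum) (auto simp: emeasure_eq_measure)
  also have "\<dots> \<le> (\<integral>x. real (X x) \<partial>M)"
    using int ind_le by (intro integral_mono) (auto simp: emeasure_eq_measure)
  finally show "(\<Sum>i<n. prob {x\<in>space M. Suc i < X x}) \<le> (\<integral>x. real (X x) \<partial>M)" .
qed simp

lemma convergent_prod_one_plus_summable:
  fixes p :: "nat \<Rightarrow> real"
  assumes "summable p" "\<And>i. 0 \<le> p i"
  shows "convergent_prod (\<lambda>i. 1 + r * p i)"
  using assms
  by (intro abs_convergent_prod_imp_convergent_prod summable_imp_abs_convergent_prod)
     (auto simp: abs_mult intro!: summable_mult)

locale iid_family = prob_space M for M :: "'a measure" and a :: "int \<Rightarrow> 'a \<Rightarrow> nat" +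
  assumes indep: "indep_vars (\<lambda>_. count_space UNIV) a UNIV"
    and identically_distributed:
      "\<And>n. distr M (count_space UNIV) (a n) = distr M (count_space UNIV) (a 0)"
begin

lemma measurable_a [measurable]: "a n \<in> measurable M (count_space UNIV)"
  using indep unfolding indep_vars_def by auto

lemma borel_measurable_comp_a [measurable]: "(\<lambda>x. f (a n x)) \<in> borel_measurable M"
  by (rule measurable_compose[OF measurable_a]) (simp add: measurable_count_space_eq1)

lemma events_comp_a [measurable]: "{x\<in>space M. P (a n x)} \<in> events"
  using measurable_sets[OF measurable_a, of "{k. P k}" n] by (simp add: vimage_def Int_def conj_commute)

lemma nn_integral_a_eq: "(\<integral>\<^sup>+x. f (a n x) \<partial>M) = (\<integral>\<^sup>+x. f (a 0 x) \<partial>M)"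
proof -
  have "(\<integral>\<^sup>+x. f (a n x) \<partial>M) = (\<integral>\<^sup>+k. f k \<partial>distr M (count_space UNIV) (a n))"
    by (rule nn_integral_distr[symmetric]) auto
  also have "\<dots> = (\<integral>\<^sup>+x. f (a 0 x) \<partial>M)"
    unfolding identically_distributed[of n] by (rule nn_integral_distr) auto
  finally show ?thesis .
qed

lemma prob_a_eq: "prob {x\<in>space M. P (a n x)} = prob {x\<in>space M. P (a 0 x)}"
proof -
  have "{x\<in>space M. P (a k x)} = a k -` {k. P k} \<inter> space M" for k by auto
  moreover have
    "measure (distr M (count_space UNIV) (a k)) {k. P k} = prob (a k -` {k. P k} \<inter> space M)" for k
    by (rule measure_distr) auto
  ultimately show ?thesis
    using identically_distributed[of n] by metis
qed

text \<open>\<open>mgf_factor t i\<close> is the paper's factor with index \<open>i + 1\<close>, contributed by \<open>a(-(i+1))\<close>.\<close>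

definition mgf_factor :: "real \<Rightarrow> nat \<Rightarrow> real" where
  "mgf_factor t i =
     exp t * prob {x \<in> space M. a 0 x > Suc i} + prob {x \<in> space M. a 0 x \<le> Suc i}"

lemma mgf_factor_nonneg: "0 \<le> mgf_factor t i"
  unfolding mgf_factor_def by simp

lemma mgf_factor_eq: "mgf_factor t i = 1 + (exp t - 1) * prob {x \<in> space M. a 0 x > Suc i}"
proof -
  have "{x \<in> space M. a 0 x \<le> Suc i} = space M - {x \<in> space M. a 0 x > Suc i}" by auto
  thus ?thesis unfolding mgf_factor_def by (simp add: prob_compl algebra_simps)
qed

lemma nn_integral_jump_factor:
  "(\<integral>\<^sup>+x. ennreal (if 0 < - int (Suc i) + int (a (- int (Suc i)) x) then exp t else 1) \<partial>M)
     = ennreal (mgf_factor t i)"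
proof -
  have "(\<integral>\<^sup>+x. ennreal (if 0 < - int (Suc i) + int (a (- int (Suc i)) x) then exp t else 1) \<partial>M)
      = (\<integral>\<^sup>+x. ennreal (exp t) * indicator {x\<in>space M. a 0 x > Suc i} x
                + indicator {x\<in>space M. a 0 x \<le> Suc i} x \<partial>M)"
    by (subst nn_integral_a_eq) (auto intro!: nn_integral_cong simp: indicator_def)
  also have "\<dots> = ennreal (mgf_factor t i)"
    by (subst nn_integral_add)
       (auto simp: nn_integral_cmult_indicator mgf_factor_def emeasure_eq_measure ennreal_mult' ennreal_plus[symmetric])
  finally show ?thesis .
qed

lemma nn_integral_exp_N0_upto:
  "(\<integral>\<^sup>+x. ennreal (exp (t * real (N0_upto n a x))) \<partial>M)
     = ennreal (exp t * (\<Prod>i<n. mgf_factor t i))"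
proof -
  let ?g = "\<lambda>m x. ennreal (if 0 < m + int (a m x) then exp t else 1)"
  have g_measurable [measurable]: "?g m \<in> borel_measurable M" for m
    by (rule borel_measurable_comp_a[of "\<lambda>k. ennreal (if 0 < m + int k then exp t else 1)"])
  have indep_g: "indep_vars (\<lambda>_. borel) ?g UNIV"
    by (rule indep_vars_compose2[OF indep]) auto
  have factor:
    "ennreal (exp (t * real (N0_upto n a x))) = ennreal (exp t) * (\<Prod>m\<in>{- int n..-1}. ?g m x)" for x
  proof -
    have "exp (t * real (N0_upto n a x))
        = exp t * exp (t * real (card {m \<in> {- int n..-1}. 0 < m + int (a m x)}))"
      unfolding N0_upto_def by (simp add: distrib_left exp_add mult.commute)
    also have "\<dots> = exp t * (\<Prod>m\<in>{- int n..-1}. if 0 < m + int (a m x) then exp t else 1)"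
      by (subst exp_mult_card_eq_prod) auto
    finally show ?thesis by (simp add: ennreal_mult' prod_ennreal)
  qed
  have "(\<integral>\<^sup>+x. ennreal (exp (t * real (N0_upto n a x))) \<partial>M)
      = ennreal (exp t) * (\<integral>\<^sup>+x. (\<Prod>m\<in>{- int n..-1}. ?g m x) \<partial>M)"
    unfolding factor by (rule nn_integral_cmult) measurable
  also have "(\<integral>\<^sup>+x. (\<Prod>m\<in>{- int n..-1}. ?g m x) \<partial>M) = (\<Prod>m\<in>{- int n..-1}. \<integral>\<^sup>+x. ?g m x \<partial>M)"
    by (rule indep_vars_nn_integral[OF _ indep_vars_subset[OF indep_g]]) auto
  also have "\<dots> = (\<Prod>i<n. \<integral>\<^sup>+x. ?g (- int (Suc i)) x \<partial>M)"
    by (rule prod.reindex_bij_witness[of _ "\<lambda>i. - int (Suc i)" "\<lambda>m. nat (- m) - 1"]) auto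
  also have "\<dots> = (\<Prod>i<n. ennreal (mgf_factor t i))"
    by (intro prod.cong refl nn_integral_jump_factor)
  finally show ?thesis
    by (simp add: prod_ennreal mgf_factor_nonneg ennreal_mult' prod_nonneg)
qed

lemma borel_measurable_N0_upto [measurable]: "(\<lambda>x. real (N0_upto n a x)) \<in> borel_measurable M"
proof -
  have "real (N0_upto n a x) = (\<Sum>m\<in>{- int n..-1}. if 0 < m + int (a m x) then 1 else 0) + 1" for x
    unfolding N0_upto_def by (simp add: sum.If_cases Int_def)
  thus ?thesis
    by (simp only:) (intro borel_measurable_add borel_measurable_sum borel_measurable_const
        borel_measurable_comp_a[of "\<lambda>k. if 0 < _ + int k then 1 else 0"])
qed

lemma convergent_prod_mgf_factor:
  assumes "integrable M (\<lambda>x. real (a 0 x))"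
  shows "convergent_prod (mgf_factor t)"
  unfolding mgf_factor_eq using assms
  by (intro convergent_prod_one_plus_summable summable_prob_greater) auto

lemma AE_eventually_N0_upto_eq_N0:
  assumes "integrable M (\<lambda>x. real (a 0 x))"
  shows "AE x in M. eventually (\<lambda>n. N0_upto n a x = N0 a x) sequentially"
proof -
  define A where "A i = {x\<in>space M. Suc i < a (- int (Suc i)) x}" for i
  have [measurable]: "A i \<in> events" for i
    unfolding A_def by (rule events_comp_a)
  have "prob (A i) = prob {x\<in>space M. Suc i < a 0 x}" for i
    unfolding A_def by (rule prob_a_eq)
  hence "summable (\<lambda>i. prob (A i))"
    using summable_prob_greater[OF measurable_a assms] by simp
  hence "AE x in M. eventually (\<lambda>i. x \<in> space M - A i) sequentially"
    by (intro borel_cantelli_AE1) (auto simp: emeasure_eq_measure)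
  thus ?thesis
  proof eventually_elim
    case (elim x)
    then obtain N where "\<And>i. N \<le> i \<Longrightarrow> a (- int (Suc i)) x \<le> Suc i"
      unfolding eventually_sequentially A_def by force
    hence "\<And>n. N \<le> n \<Longrightarrow> N0_upto n a x = N0 a x"
      by (intro N0_upto_eq_N0) auto
    thus ?case
      unfolding eventually_sequentially by blast
  qed
qed

lemma LIMSEQ_nn_integral_exp_N0_upto:
  assumes "integrable M (\<lambda>x. real (a 0 x))"
  shows "(\<lambda>n. \<integral>\<^sup>+x. ennreal (exp (t * real (N0_upto n a x))) \<partial>M)
           \<longlonglongrightarrow> (\<integral>\<^sup>+x. ennreal (exp (t * real (N0 a x))) \<partial>M)"
proof -
  have lim: "AE x in M. (\<lambda>n. ennreal (exp (t * real (N0_upto n a x))))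
                          \<longlonglongrightarrow> ennreal (exp (t * real (N0 a x)))"
    using AE_eventually_N0_upto_eq_N0[OF assms]
    by eventually_elim (auto intro: tendsto_eventually elim: eventually_mono)
  show ?thesis
  proof (cases "0 \<le> t")
    case True
    have "incseq (\<lambda>n. ennreal (exp (t * real (N0_upto n a x))))" for x
      using True by (intro incseq_SucI ennreal_leI) (simp add: mult_left_mono N0_upto_mono)
    thus ?thesis
      by (rule nn_integral_LIMSEQ_AE_incseq[OF _ _ lim]) measurable
  next
    case False
    have "decseq (\<lambda>n. ennreal (exp (t * real (N0_upto n a x))))" for x
      using False by (intro decseq_SucI ennreal_leI) (simp add: mult_left_mono_neg N0_upto_mono)
    thus ?thesis
      by (rule nn_integral_LIMSEQ_AE_decseq[OF _ _ _ lim]) (simp_all add: nn_integral_exp_N0_upto)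
  qed
qed

lemma nn_integral_exp_N0:
  assumes "integrable M (\<lambda>x. real (a 0 x))"
  shows "(\<integral>\<^sup>+x. ennreal (exp (t * real (N0 a x))) \<partial>M)
           = ennreal (exp t * prodinf (mgf_factor t))"
proof (rule LIMSEQ_unique[OF LIMSEQ_nn_integral_exp_N0_upto[OF assms]])
  have "(\<lambda>n. \<Prod>i<n. mgf_factor t i) \<longlonglongrightarrow> prodinf (mgf_factor t)"
    using convergent_prod_LIMSEQ[OF convergent_prod_mgf_factor[OF assms]]
    by (simp add: LIMSEQ_lessThan_iff_atMost)
  thus "(\<lambda>n. \<integral>\<^sup>+x. ennreal (exp (t * real (N0_upto n a x))) \<partial>M)
          \<longlonglongrightarrow> ennreal (exp t * prodinf (mgf_factor t))"
    unfolding nn_integral_exp_N0_upto by (intro tendsto_ennrealI tendsto_mult tendsto_const)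
qed

end

theorem mainTheorem4:
  fixes M :: "'a measure" and a :: "int \<Rightarrow> 'a \<Rightarrow> nat" and t :: real
  assumes "prob_space M"
    and "prob_space.indep_vars M (\<lambda>_. count_space UNIV) a UNIV"
    and "\<And>n. distr M (count_space UNIV) (a n) = distr M (count_space UNIV) (a 0)"
    and "\<And>n x. x \<in> space M \<Longrightarrow> a n x \<ge> 1"
    and "integrable M (\<lambda>x. real (a 0 x))"
  shows "convergent_prod (\<lambda>i. exp t * measure M {x \<in> space M. a 0 x > Suc i}
                               + measure M {x \<in> space M. a 0 x \<le> Suc i})
    \<and> (\<integral>\<^sup>+ x. ennreal (exp (t * real (N0 a x))) \<partial>M)
        = ennreal (exp t * (\<Prod>i. exp t * measure M {x \<in> space M. a 0 x > Suc i}
                               + measure M {x \<in> space M. a 0 x \<le> Suc i}))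
    \<and> (\<integral>\<^sup>+ x. ennreal (exp (t * real (N0 a x))) \<partial>M) < \<infinity>"
proof -
  interpret iid_family M a
    using assms(1-3) by (simp add: iid_family_def iid_family_axioms_def)
  have factor_eq: "(\<lambda>i. exp t * measure M {x \<in> space M. a 0 x > Suc i}
                               + measure M {x \<in> space M. a 0 x \<le> Suc i}) = mgf_factor t"
    by (simp add: mgf_factor_def fun_eq_iff)
  show ?thesis
    unfolding factor_eq
    using convergent_prod_mgf_factor[OF assms(5)] nn_integral_exp_N0[OF assms(5)] by simp
qed

end
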